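(* $\mathrm{Sen}(\tilde{\mathcal N})\lesssim\mathrm{Sen}(\mathcal N)$: for every $n\ge1$ and every $P\in(0,1/2)$ there is a probability measure $\mu_P$ on $[0,\infty)$ such that, entrywise, $\mathrm{Sen}(\tilde{\mathcal N})_P\le\int\mathrm{Sen}(\mathcal N)_T\,d\mu_P(T)$.
   Context: Let $\mathbb{I}^n=\{0,1\}^n$ with Hamming distance $d$; operators on $\mathbb{R}^{\mathbb{I}^n}$ are identified with $2^n\times2^n$ matrices, and $A\le B$ means $B-A$ has nonnegative entries. For $0\le k\le n$, $(S_kf)(x)=\binom nk^{-1}\sum_{y:\,d(x,y)=k}f(y)$. For $p\in[0,1/2]$, $\tilde N_p=\sum_{k=0}^n\binom nkp^k(1-p)^{n-k}S_k$, and for $t\ge0$, $N_t=\tilde N_{(1-e^{-t})/2}$. Senate operators: $\mathrm{Sen}(\mathcal N)_T=\frac1T\int_0^TN_t\,dt$ for $T>0$ (and $\mathrm{Sen}(\mathcal N)_0=N_0=$ identity), and $\mathrm{Sen}(\tilde{\mathcal N})_P=\frac1P\int_0^P\tilde N_p\,dp$ for $P\in(0,1/2)$. For families $\mathcal A,\mathcal B$ of nonnegative matrices, $\mathcal A\lesssim\mathcal B$ means that for every $A\in\mathcal A$ there is a probability measure $\mu_A$ on $\mathcal B$ with $A\le\int B\,d\mu_A(B)$. *)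

theory Defs
  imports "HOL-Probability.Probability"
begin

text \<open>The cube I^n is represented as the subsets of {..<n} (x corresponds to its indicator
 vector); the Hamming distance is the cardinality of the symmetric difference.
 Operators are functions of two cube points (matrix entries).\<close>

definition cube :: "nat \<Rightarrow> nat set set" where
  "cube n = Pow {..<n}"

definition hamming :: "nat set \<Rightarrow> nat set \<Rightarrow> nat" where
  "hamming x y = card ((x - y) \<union> (y - x))"

text \<open>Matrix entries of S_k: (S_k f)(x) = binom(n,k)^{-1} * sum over y with d(x,y)=k of f(y).\<close>
definition S_op :: "nat \<Rightarrow> nat \<Rightarrow> nat set \<Rightarrow> nat set \<Rightarrow> real" where
  "S_op n k x y = (if hamming x y = k then 1 / real (n choose k) else 0)"

definition Ntil :: "nat \<Rightarrow> real \<Rightarrow> nat set \<Rightarrow> nat set \<Rightarrow> real" where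
  "Ntil n p x y = (\<Sum>k\<le>n. real (n choose k) * p ^ k * (1 - p) ^ (n - k) * S_op n k x y)"

definition Nt :: "nat \<Rightarrow> real \<Rightarrow> nat set \<Rightarrow> nat set \<Rightarrow> real" where
  "Nt n t = Ntil n ((1 - exp (- t)) / 2)"

definition SenN :: "nat \<Rightarrow> real \<Rightarrow> nat set \<Rightarrow> nat set \<Rightarrow> real" where
  "SenN n T x y = (if T = 0 then (if x = y then 1 else 0)
                   else (1 / T) * integral {0..T} (\<lambda>t. Nt n t x y))"

definition SenNtil :: "nat \<Rightarrow> real \<Rightarrow> nat set \<Rightarrow> nat set \<Rightarrow> real" where
  "SenNtil n P x y = (1 / P) * integral {0..P} (\<lambda>p. Ntil n p x y)"

end

theory Submission
  imports Defs
begin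

text \<open>Write p(t) = (1 - exp(-t))/2, so that N_t is the noise operator with parameter p(t), and
  let a be the time with p(a) = P. Take mu_P with density T exp(-T)/(2P) on [0, a] plus an atom of
  mass a exp(-a)/(2P) at a. With F(T) the integral of N_t over [0, T], the weight T cancels the
  normalisation of Sen(N)_T = F(T)/T, so entrywise the mu_P-average of Sen(N)_T equals
  (int_0^a F(s) exp(-s) ds + F(a) exp(-a))/(2P). Integrating by parts this is
  (1/(2P)) int_0^a N_s exp(-s) ds, and the substitution u = p(s), du = exp(-s)/2 ds turns it into
  (1/P) int_0^P Ntil_u du, which is Sen(Ntil)_P. So the inequality even holds with equality, and
  for every n.\<close>

definition flip_prob :: "real \<Rightarrow> real" where
  "flip_prob t = (1 - exp (- t)) / 2"

definition running_mean :: "(real \<Rightarrow> real) \<Rightarrow> real \<Rightarrow> real \<Rightarrow> real" where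
  "running_mean h c T = (if T = 0 then c else (1 / T) * integral {0..T} h)"

lemma flip_prob_in_unit_interval: "0 \<le> t \<Longrightarrow> flip_prob t \<in> {0..1}"
  unfolding flip_prob_def using exp_gt_zero[of "- t"] by (simp del: exp_gt_zero)

lemma continuous_on_flip_prob: "continuous_on UNIV flip_prob"
  unfolding flip_prob_def by (intro continuous_intros) simp

lemma continuous_on_comp_flip_prob:
  assumes "continuous_on UNIV g"
  shows "continuous_on UNIV (g \<circ> flip_prob)"
  using continuous_on_compose[OF continuous_on_flip_prob continuous_on_subset[OF assms subset_UNIV]] .

lemma flip_prob_has_real_derivative:
  "(flip_prob has_real_derivative exp (- t) / 2) (at t within S)"
  unfolding flip_prob_def by (auto intro!: derivative_eq_intros)

lemma continuous_on_integral_from_0: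
  fixes h :: "real \<Rightarrow> real"
  assumes "continuous_on UNIV h"
  shows "continuous_on {0..b} (\<lambda>T. integral {0..T} h)"
  using assms by (intro indefinite_integral_continuous_1 integrable_continuous_interval)
    (rule continuous_on_subset, auto)

lemma isCont_integral_from_0:
  fixes h :: "real \<Rightarrow> real"
  assumes "continuous_on UNIV h" and "0 < x"
  shows "isCont (\<lambda>T. integral {0..T} h) x"
proof (rule continuous_on_interior[OF continuous_on_integral_from_0[OF assms(1)]])
  show "x \<in> interior {0..x + 1}" using \<open>0 < x\<close> by simp
qed

lemma borel_measurable_running_mean:
  fixes h :: "real \<Rightarrow> real"
  assumes "continuous_on UNIV h"
  shows "running_mean h c \<in> borel_measurable borel"
proof -
  have cont: "continuous_on {0<..} (\<lambda>T. (1 / T) * integral {0..T} h)"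
    using isCont_integral_from_0[OF assms]
    by (intro continuous_at_imp_continuous_on ballI continuous_intros) auto
  have "running_mean h c =
      (\<lambda>T. indicator {0<..} T *\<^sub>R ((1 / T) * integral {0..T} h) + indicator {0} T * c)"
    by (auto simp: running_mean_def indicator_def fun_eq_iff)
  moreover have "(\<lambda>T. indicator {0<..} T *\<^sub>R ((1 / T) * integral {0..T} h)) \<in> borel_measurable borel"
    by (rule borel_measurable_continuous_on_indicator[OF _ cont]) simp
  ultimately show ?thesis by simp
qed

text \<open>Both sides vanish at a = 0 and have the same derivative in a.\<close>

lemma exp_weighted_integral_flip_prob:
  fixes g :: "real \<Rightarrow> real"
  assumes cont_g: "continuous_on UNIV g" and "0 \<le> a"
  shows "integral {0..a} (\<lambda>s. integral {0..s} (g \<circ> flip_prob) * exp (- s))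
           + integral {0..a} (g \<circ> flip_prob) * exp (- a)
         = 2 * integral {0..flip_prob a} g"
proof -
  define F where "F T = integral {0..T} (g \<circ> flip_prob)" for T
  define G where "G u = integral {0..u} g" for u
  define K where "K T = integral {0..T} (\<lambda>s. F s * exp (- s)) + F T * exp (- T) - 2 * G (flip_prob T)"
    for T
  have cont_gq: "continuous_on UNIV (g \<circ> flip_prob)"
    using cont_g by (rule continuous_on_comp_flip_prob)
  have "\<exists>c. \<forall>x\<in>{0..a}. K x = c"
  proof (rule has_field_derivative_zero_constant[OF convex_real_interval(5)])
    fix x assume x: "x \<in> {0..a}"
    have "continuous_on {0..a} (\<lambda>s. F s * exp (- s))"
      unfolding F_def by (intro continuous_intros continuous_on_integral_from_0[OF cont_gq])
    from integral_has_real_derivative[OF this x]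
    have dF_exp: "((\<lambda>T. integral {0..T} (\<lambda>s. F s * exp (- s))) has_real_derivative F x * exp (- x))
        (at x within {0..a})" .
    have dF: "(F has_real_derivative g (flip_prob x)) (at x within {0..a})"
      unfolding F_def
      using integral_has_real_derivative[OF continuous_on_subset[OF cont_gq subset_UNIV] x] by simp
    have range: "flip_prob ` {0..a} \<subseteq> {0..1}"
      by (intro image_subsetI flip_prob_in_unit_interval) simp
    have "flip_prob x \<in> {0..1}"
      using x by (intro flip_prob_in_unit_interval) simp
    from integral_has_real_derivative[OF continuous_on_subset[OF cont_g subset_UNIV] this]
    have "(G has_real_derivative g (flip_prob x)) (at (flip_prob x) within {0..1})"
      unfolding G_def .
    then have "(G has_real_derivative g (flip_prob x)) (at (flip_prob x) within flip_prob ` {0..a})"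
      using range by (rule has_field_derivative_subset)
    from DERIV_image_chain[OF this flip_prob_has_real_derivative]
    have dG: "(G \<circ> flip_prob has_real_derivative g (flip_prob x) * (exp (- x) / 2)) (at x within {0..a})" .
    have "(K has_real_derivative F x * exp (- x) + (g (flip_prob x) * exp (- x) + F x * - exp (- x))
        - 2 * (g (flip_prob x) * (exp (- x) / 2))) (at x within {0..a})"
      unfolding K_def using dG
      by (auto intro!: derivative_eq_intros dF_exp dF simp: comp_def)
    then show "(K has_real_derivative 0) (at x within {0..a})"
      by (simp add: algebra_simps)
  qed
  then obtain c where "\<forall>x\<in>{0..a}. K x = c" ..
  then have "K a = K 0" using \<open>0 \<le> a\<close> by simp
  also have "K 0 = 0" by (simp add: K_def F_def G_def flip_prob_def)
  finally show ?thesis by (simp add: K_def F_def G_def)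
qed

definition mixing_horizon :: "real \<Rightarrow> real" where
  "mixing_horizon P = - ln (1 - 2 * P)"

definition mixing_weight :: "real \<Rightarrow> real \<Rightarrow> real" where
  "mixing_weight P s = indicator {0..mixing_horizon P + 1} s *
     (min s (mixing_horizon P) * exp (- min s (mixing_horizon P)) / (2 * P))"

definition mixing_clamp :: "real \<Rightarrow> real \<Rightarrow> real" where
  "mixing_clamp P s = max 0 (min s (mixing_horizon P))"

text \<open>The atom at the horizon a is produced by pushing the density on [a, a + 1] forward
  along the clamp to [0, a].\<close>

definition mixing_measure :: "real \<Rightarrow> real measure" where
  "mixing_measure P =
     distr (density lborel (\<lambda>s. ennreal (mixing_weight P s))) borel (mixing_clamp P)"

lemma mixing_horizon_pos: "0 < P \<Longrightarrow> P < 1 / 2 \<Longrightarrow> 0 < mixing_horizon P"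
  by (simp add: mixing_horizon_def)

lemma flip_prob_mixing_horizon: "P < 1 / 2 \<Longrightarrow> flip_prob (mixing_horizon P) = P"
  by (simp add: mixing_horizon_def flip_prob_def)

lemma mixing_weight_nonneg: "0 < P \<Longrightarrow> P < 1 / 2 \<Longrightarrow> 0 \<le> mixing_weight P s"
  using mixing_horizon_pos[of P] by (auto simp: mixing_weight_def indicator_def)

lemma borel_measurable_mixing_weight [measurable]: "mixing_weight P \<in> borel_measurable borel"
  unfolding mixing_weight_def by measurable

lemma borel_measurable_mixing_clamp [measurable]: "mixing_clamp P \<in> borel_measurable borel"
  unfolding mixing_clamp_def by measurable

lemma sets_mixing_measure: "sets (mixing_measure P) = sets borel"
  by (simp add: mixing_measure_def)

lemma AE_mixing_measure_nonneg: "AE T in mixing_measure P. 0 \<le> T"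
  unfolding mixing_measure_def by (subst AE_distr_iff) (auto simp: mixing_clamp_def)

lemma
  assumes "0 < P" "P < 1 / 2" and [measurable]: "H \<in> borel_measurable borel"
  shows integrable_mixing_measure_iff:
      "integrable (mixing_measure P) H \<longleftrightarrow>
       integrable lborel (\<lambda>s. mixing_weight P s * H (mixing_clamp P s))"
    and integral_mixing_measure:
      "integral\<^sup>L (mixing_measure P) H = integral\<^sup>L lborel (\<lambda>s. mixing_weight P s * H (mixing_clamp P s))"
proof -
  have "integrable (mixing_measure P) H \<longleftrightarrow>
      integrable (density lborel (\<lambda>s. ennreal (mixing_weight P s))) (\<lambda>s. H (mixing_clamp P s))"
    unfolding mixing_measure_def by (rule integrable_distr_eq) measurable
  also have "\<dots> \<longleftrightarrow> integrable lborel (\<lambda>s. mixing_weight P s *\<^sub>R H (mixing_clamp P s))"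
    using mixing_weight_nonneg[OF assms(1,2)] by (intro integrable_density) auto
  finally show "integrable (mixing_measure P) H \<longleftrightarrow>
       integrable lborel (\<lambda>s. mixing_weight P s * H (mixing_clamp P s))" by simp
  have "integral\<^sup>L (mixing_measure P) H =
      integral\<^sup>L (density lborel (\<lambda>s. ennreal (mixing_weight P s))) (\<lambda>s. H (mixing_clamp P s))"
    unfolding mixing_measure_def by (rule integral_distr) measurable
  also have "\<dots> = integral\<^sup>L lborel (\<lambda>s. mixing_weight P s *\<^sub>R H (mixing_clamp P s))"
    using mixing_weight_nonneg[OF assms(1,2)] by (intro integral_density) auto
  finally show "integral\<^sup>L (mixing_measure P) H =
      integral\<^sup>L lborel (\<lambda>s. mixing_weight P s * H (mixing_clamp P s))" by simp
qed

lemma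
  fixes g :: "real \<Rightarrow> real"
  assumes cont_g: "continuous_on UNIV g" and P: "0 < P" "P < 1 / 2"
  shows integrable_lborel_mixing_weight_running_mean:
      "integrable lborel (\<lambda>s. mixing_weight P s * running_mean (g \<circ> flip_prob) c (mixing_clamp P s))"
    and integral_lborel_mixing_weight_running_mean:
      "integral\<^sup>L lborel (\<lambda>s. mixing_weight P s * running_mean (g \<circ> flip_prob) c (mixing_clamp P s))
         = (1 / P) * integral {0..P} g"
proof -
  define a where "a = mixing_horizon P"
  define F where "F T = integral {0..T} (g \<circ> flip_prob)" for T
  define \<phi> where "\<phi> s = F (min s a) * exp (- min s a) / (2 * P)" for s
  have "0 < a" unfolding a_def using P by (rule mixing_horizon_pos)
  have cont_gq: "continuous_on UNIV (g \<circ> flip_prob)"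
    using cont_g by (rule continuous_on_comp_flip_prob)
  \<comment> \<open>The factor min s a of the weight cancels the 1/T of the running mean.\<close>
  have weight_eq: "mixing_weight P s * running_mean (g \<circ> flip_prob) c (mixing_clamp P s)
      = indicator {0..a + 1} s *\<^sub>R \<phi> s" for s
  proof (cases "s \<in> {0..a + 1} \<and> min s a \<noteq> 0")
    case True
    then have "mixing_clamp P s = min s a" "min s a \<noteq> 0"
      using \<open>0 < a\<close> by (auto simp: mixing_clamp_def a_def)
    then show ?thesis using True
      by (simp add: mixing_weight_def running_mean_def \<phi>_def F_def a_def)
  next
    case False
    then show ?thesis by (auto simp: mixing_weight_def \<phi>_def F_def a_def)
  qed
  have "continuous_on {0..a} F"
    unfolding F_def by (rule continuous_on_integral_from_0[OF cont_gq])
  moreover have "continuous_on {0..a + 1} (\<lambda>s. min s a)"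
    by (intro continuous_intros)
  moreover have "(\<lambda>s. min s a) ` {0..a + 1} \<subseteq> {0..a}"
    using \<open>0 < a\<close> by auto
  ultimately have "continuous_on {0..a + 1} (\<lambda>s. F (min s a))"
    by (rule continuous_on_compose2)
  then have cont_\<phi>: "continuous_on {0..a + 1} \<phi>"
    unfolding \<phi>_def using P by (intro continuous_intros) auto
  have int_\<phi>: "integrable lborel (\<lambda>s. indicator {0..a + 1} s *\<^sub>R \<phi> s)"
    by (rule borel_integrable_compact[OF compact_Icc cont_\<phi>])
  then show "integrable lborel (\<lambda>s. mixing_weight P s * running_mean (g \<circ> flip_prob) c (mixing_clamp P s))"
    by (simp only: weight_eq)
  have "integral\<^sup>L lborel (\<lambda>s. indicator {0..a + 1} s *\<^sub>R \<phi> s) = integral {0..a + 1} \<phi>"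
    using set_borel_integral_eq_integral(2)[of "{0..a + 1}" \<phi>] int_\<phi>
    by (simp add: set_integrable_def set_lebesgue_integral_def)
  also have "\<dots> = integral {0..a} \<phi> + integral {a..a + 1} \<phi>"
    using \<open>0 < a\<close> by (intro Henstock_Kurzweil_Integration.integral_combine[symmetric]
        integrable_continuous_interval[OF cont_\<phi>]) auto
  also have "integral {0..a} \<phi> = integral {0..a} (\<lambda>s. F s * exp (- s)) / (2 * P)"
    by (subst integral_divide[symmetric], rule integral_cong) (simp add: \<phi>_def)
  also have "integral {a..a + 1} \<phi> = F a * exp (- a) / (2 * P)"
    using integral_cong[of "{a..a + 1}" \<phi> "\<lambda>_. F a * exp (- a) / (2 * P)"] by (simp add: \<phi>_def)
  also have "integral {0..a} (\<lambda>s. F s * exp (- s)) / (2 * P) + F a * exp (- a) / (2 * P)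
      = (1 / P) * integral {0..P} g"
    using exp_weighted_integral_flip_prob[OF cont_g less_imp_le[OF \<open>0 < a\<close>]] P
    by (simp add: F_def a_def flip_prob_mixing_horizon add_divide_distrib[symmetric])
  finally show "integral\<^sup>L lborel (\<lambda>s. mixing_weight P s * running_mean (g \<circ> flip_prob) c (mixing_clamp P s))
      = (1 / P) * integral {0..P} g"
    by (simp only: weight_eq)
qed

lemma
  fixes g :: "real \<Rightarrow> real"
  assumes cont_g: "continuous_on UNIV g" and P: "0 < P" "P < 1 / 2"
  shows integrable_mixing_measure_running_mean:
      "integrable (mixing_measure P) (running_mean (g \<circ> flip_prob) c)"
    and integral_mixing_measure_running_mean:
      "integral\<^sup>L (mixing_measure P) (running_mean (g \<circ> flip_prob) c) = (1 / P) * integral {0..P} g"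
proof -
  from continuous_on_comp_flip_prob[OF cont_g]
  have "running_mean (g \<circ> flip_prob) c \<in> borel_measurable borel"
    by (rule borel_measurable_running_mean)
  then show "integrable (mixing_measure P) (running_mean (g \<circ> flip_prob) c)"
    and "integral\<^sup>L (mixing_measure P) (running_mean (g \<circ> flip_prob) c) = (1 / P) * integral {0..P} g"
    using P cont_g integrable_lborel_mixing_weight_running_mean integral_lborel_mixing_weight_running_mean
    by (simp_all add: integrable_mixing_measure_iff integral_mixing_measure)
qed

lemma prob_space_mixing_measure:
  assumes P: "0 < P" "P < 1 / 2"
  shows "prob_space (mixing_measure P)"
proof
  have const_mean: "running_mean (\<lambda>_. 1) 1 (mixing_clamp P s) = 1" for s
    by (simp add: running_mean_def mixing_clamp_def)
  have "integrable lborel (mixing_weight P)" and "integral\<^sup>L lborel (mixing_weight P) = 1"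
    using integrable_lborel_mixing_weight_running_mean[of "\<lambda>_. 1" P 1]
      integral_lborel_mixing_weight_running_mean[of "\<lambda>_. 1" P 1] P
    by (simp_all add: const_mean)
  then have "(\<integral>\<^sup>+ s. ennreal (mixing_weight P s) \<partial>lborel) = 1"
    using mixing_weight_nonneg[OF P] by (simp add: nn_integral_eq_integral)
  then show "emeasure (mixing_measure P) (space (mixing_measure P)) = 1"
    by (simp add: mixing_measure_def emeasure_distr emeasure_density)
qed

lemma continuous_on_Ntil: "continuous_on UNIV (\<lambda>p. Ntil n p x y)"
  unfolding Ntil_def by (intro continuous_intros)

lemma SenN_eq_running_mean:
  "(\<lambda>T. SenN n T x y) = running_mean ((\<lambda>p. Ntil n p x y) \<circ> flip_prob) (if x = y then 1 else 0)"
  by (simp add: fun_eq_iff SenN_def Nt_def running_mean_def flip_prob_def comp_def)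

theorem lemma4:
  fixes n :: nat and P :: real
  assumes "n \<ge> 1" and "0 < P" and "P < 1/2"
  shows "\<exists>\<mu> :: real measure. prob_space \<mu> \<and> sets \<mu> = sets borel \<and>
           (AE T in \<mu>. T \<ge> 0) \<and>
           (\<forall>x\<in>cube n. \<forall>y\<in>cube n.
              integrable \<mu> (\<lambda>T. SenN n T x y) \<and>
              SenNtil n P x y \<le> (\<integral>T. SenN n T x y \<partial>\<mu>))"
proof (intro exI[of _ "mixing_measure P"] conjI ballI)
  have P: "0 < P" "P < 1 / 2" using assms by simp_all
  show "prob_space (mixing_measure P)" using P by (rule prob_space_mixing_measure)
  show "sets (mixing_measure P) = sets borel" by (rule sets_mixing_measure)
  show "AE T in mixing_measure P. 0 \<le> T" by (rule AE_mixing_measure_nonneg)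
  fix x y
  show "integrable (mixing_measure P) (\<lambda>T. SenN n T x y)"
    unfolding SenN_eq_running_mean
    using continuous_on_Ntil P by (rule integrable_mixing_measure_running_mean)
  have "(\<integral>T. SenN n T x y \<partial>mixing_measure P) = SenNtil n P x y"
    unfolding SenN_eq_running_mean SenNtil_def
    using continuous_on_Ntil P by (rule integral_mixing_measure_running_mean)
  then show "SenNtil n P x y \<le> (\<integral>T. SenN n T x y \<partial>mixing_measure P)" by simp
qed

end
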